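(* Let $1<a<2$, $B>0$, $P\ge 1$, $\delta>0$ and a positive integer $k$ with $(a/2)^{k-1}a \le 1-3\delta$. Let $(Z_n)$ be any real sequence and consider the system $X_{n+1} = aX_n + Z_n - U_n$ run under the following round-based rule starting at a time $m$ which is the start of a round, i.e. $C_m>0$ and $|X_m|\le C_m$: $U_m=0$; $C_{m+1}=aC_m+B$; $C_{m+i} = \frac a2 C_{m+i-1}+B$ for $i=2,\ldots,k$; $U_{m+i} = \frac a2 C_{m+i}\operatorname{sign}(X_{m+i})$ for $i=1,\ldots,k-1$; then $C_{m+k+j}=P^jC_{m+k}$ and $U_{m+k+j}=0$ for $j\ge 0$, up to $\tau \triangleq \inf\{j\ge0\colon |X_{m+k+j}|\le C_{m+k+j}\}$ (the round ends at time $m+k+\tau$). Then for every integer $j$ with $0\le j\le\tau$, $$\max\{|X_{m+1}|,\ldots,|X_{m+k+j}|,C_{m+k+j}\} \le P a^{k+j}\left(2C_m + \frac{aB}{(2-a)(a-1)} + \sum_{\ell=0}^{k+j-1}a^{-\ell-1}|Z_{m+\ell}|\right).$$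
   Context: $\operatorname{sign}(x)\in\{-1,0,1\}$ denotes the sign of $x$. The quantities $C_n$ are the bounds on the state magnitude maintained by a 1-bit quantizer-controller scheme: during the first $k$ steps of a round the quantizer sends signs of the state and at time $m+k+j$ it sends whether $|X_{m+k+j}|\le C_{m+k+j}$ (magnitude test). *)

theory Defs
  imports Complex_Main
begin

end

(*
  Write E_i for a^i times the weighted noise sum, so that E_(i+1) = a E_i + |Z_(m+i)| is the
  worst-case effect of the noise on the state. While the quantizer sends signs, subtracting
  (a/2) C sgn X halves the uncertainty interval, which keeps |X_(m+i)| <= C_(m+i) + E_i.
  Since (2-a)(a-1) <= 1/4, the constant K = 2 C_m + aB/((2-a)(a-1)) is at least 4aB, which is
  enough to absorb the additive B in C_(m+i) <= a^i K. Once the control is switched off, |X|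
  grows at most by the factor a plus the noise, so |X_(m+i)| <= a^i K + E_i persists. Finally,
  the magnitude test fails before the stopping time, so C_(m+k+j) = P C_(m+k+j-1) is less
  than P |X_(m+k+j-1)|.
*)
theory Submission
  imports Defs
begin

definition noise_sum :: "real \<Rightarrow> (nat \<Rightarrow> real) \<Rightarrow> nat \<Rightarrow> real" where
  "noise_sum a z n = (\<Sum>l<n. \<bar>z l\<bar> / a ^ (l + 1))"

lemma noise_sum_0 [simp]: "noise_sum a z 0 = 0"
  by (simp add: noise_sum_def)

lemma noise_sum_nonneg: "0 < a \<Longrightarrow> 0 \<le> noise_sum a z n"
  unfolding noise_sum_def by (intro sum_nonneg) auto

lemma noise_sum_mono: "0 < a \<Longrightarrow> n \<le> n' \<Longrightarrow> noise_sum a z n \<le> noise_sum a z n'"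
  unfolding noise_sum_def by (intro sum_mono2) auto

lemma power_mult_noise_sum_Suc:
  "a \<noteq> 0 \<Longrightarrow> a ^ Suc n * noise_sum a z (Suc n) = a * (a ^ n * noise_sum a z n) + \<bar>z n\<bar>"
  unfolding noise_sum_def by (simp add: field_simps)

lemma abs_sub_half_sgn_le:
  fixes x c e :: real
  assumes "\<bar>x\<bar> \<le> c + e" "0 \<le> c" "0 \<le> e"
  shows "\<bar>x - c / 2 * sgn x\<bar> \<le> c / 2 + e"
  using assms by (cases x "0::real" rule: linorder_cases) auto

lemma four_mult_le_div_gap_product:
  fixes a B :: real
  assumes "1 < a" "a < 2" "0 \<le> B"
  shows "4 * a * B \<le> a * B / ((2 - a) * (a - 1))"
proof -
  have gap_pos: "0 < (2 - a) * (a - 1)" using assms by simp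
  have "(2 - a) * (a - 1) = 1/4 - (a - 3/2)^2" by (simp add: power2_eq_square algebra_simps)
  then have "(2 - a) * (a - 1) \<le> 1/4" by simp
  then have "4 * a * B * ((2 - a) * (a - 1)) \<le> 4 * a * B * (1/4)"
    using assms by (intro mult_left_mono) auto
  then show ?thesis using gap_pos by (simp add: pos_le_divide_eq)
qed

lemma round_threshold_nonneg:
  fixes a B :: real and c :: "nat \<Rightarrow> real"
  assumes "0 < a" "0 \<le> B" "0 \<le> c 0"
    and "c 1 = a * c 0 + B"
    and c_Suc: "\<And>i. 1 \<le> i \<Longrightarrow> i < n \<Longrightarrow> c (Suc i) = a / 2 * c i + B"
    and "i \<le> n"
  shows "0 \<le> c i"
  using \<open>i \<le> n\<close>
proof (induction i)
  case (Suc i)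
  then show ?case
    using assms c_Suc[of i] by (cases "i = 0") auto
qed (use assms in simp)

lemma round_threshold_le:
  fixes a B :: real and c :: "nat \<Rightarrow> real"
  assumes a: "1 < a" "a < 2" and B: "0 \<le> B" and c_0: "0 \<le> c 0"
    and c_1: "c 1 = a * c 0 + B"
    and c_Suc: "\<And>i. 1 \<le> i \<Longrightarrow> i < n \<Longrightarrow> c (Suc i) = a / 2 * c i + B"
    and "1 \<le> i" "i \<le> n"
  shows "c i \<le> a ^ i * (2 * c 0 + a * B / ((2 - a) * (a - 1)))"
proof -
  define D where "D = a * B / ((2 - a) * (a - 1))"
  define K where "K = 2 * c 0 + D"
  have D: "4 * a * B \<le> D"
    unfolding D_def using four_mult_le_div_gap_product[OF a B] .
  have "0 \<le> 4 * a * B" using a B by simp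
  then have K: "4 * a * B \<le> K" "0 \<le> K"
    using D c_0 unfolding K_def by linarith+
  have "1 * B \<le> (2 * (a * a)) * B"
    using a B less_1_mult[of a a] by (intro mult_right_mono) auto
  then have B_le: "B \<le> a / 2 * (4 * a * B)"
    by (simp add: algebra_simps)
  have "c i \<le> a ^ i * K"
    using \<open>1 \<le> i\<close> \<open>i \<le> n\<close>
  proof (induction i rule: nat_induct_at_least)
    case base
    note B_le
    also have "a / 2 * (4 * a * B) \<le> a * (4 * a * B)" using a B by simp
    also have "\<dots> \<le> a * D" using D a by (intro mult_left_mono) auto
    finally have "B \<le> a * D" .
    moreover have "0 \<le> a * c 0" using c_0 a by simp
    ultimately show ?case using c_1 by (simp add: K_def distrib_left)
  next
    case (Suc i)
    note B_le
    also have "a / 2 * (4 * a * B) \<le> a / 2 * K" using K a by (intro mult_left_mono) auto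
    also have "\<dots> \<le> a / 2 * (a ^ i * K)"
      using K a by (intro mult_left_mono) (auto simp: mult_le_cancel_right1)
    finally have "B \<le> a / 2 * (a ^ i * K)" .
    moreover have "a / 2 * c i \<le> a / 2 * (a ^ i * K)"
      using Suc a by (intro mult_left_mono) auto
    ultimately show ?case using c_Suc[of i] Suc by simp
  qed
  then show ?thesis by (simp add: K_def D_def)
qed

lemma quantized_phase_abs_le:
  fixes a B :: real and x z u c :: "nat \<Rightarrow> real"
  assumes a: "0 < a" and B: "0 \<le> B"
    and x_Suc: "\<And>i. i < n \<Longrightarrow> x (Suc i) = a * x i + z i - u i"
    and x_0: "\<bar>x 0\<bar> \<le> c 0" and u_0: "u 0 = 0"
    and c_1: "c 1 = a * c 0 + B"
    and c_Suc: "\<And>i. 1 \<le> i \<Longrightarrow> i < n \<Longrightarrow> c (Suc i) = a / 2 * c i + B"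
    and u_quantized: "\<And>i. 1 \<le> i \<Longrightarrow> i < n \<Longrightarrow> u i = a / 2 * c i * sgn (x i)"
    and "i \<le> n"
  shows "\<bar>x i\<bar> \<le> c i + a ^ i * noise_sum a z i"
  using \<open>i \<le> n\<close>
proof (induction i)
  case 0
  then show ?case using x_0 by simp
next
  case (Suc i)
  define e where "e = a ^ i * noise_sum a z i"
  have e: "0 \<le> e" unfolding e_def using a noise_sum_nonneg[OF a] by simp
  have IH: "\<bar>x i\<bar> \<le> c i + e" using Suc unfolding e_def by simp
  have e_Suc: "a ^ Suc i * noise_sum a z (Suc i) = a * e + \<bar>z i\<bar>"
    unfolding e_def using power_mult_noise_sum_Suc a by simp
  show ?case
  proof (cases "i = 0")
    case True
    have "\<bar>x 1\<bar> \<le> \<bar>a * x 0\<bar> + \<bar>z 0\<bar>"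
      using x_Suc[of 0] u_0 Suc True by (simp add: abs_triangle_ineq)
    also have "\<dots> \<le> a * c 0 + \<bar>z 0\<bar>"
      using x_0 a by (simp add: abs_mult mult_left_mono)
    finally show ?thesis using True c_1 B e_Suc by (simp add: e_def)
  next
    case False
    have c_i: "0 \<le> c i"
      using round_threshold_nonneg[OF a B _ c_1 c_Suc, of i] x_0 Suc by simp
    have "x (Suc i) = a * (x i - c i / 2 * sgn (x i)) + z i"
      using x_Suc[of i] u_quantized[of i] Suc False by (simp add: algebra_simps)
    then have "\<bar>x (Suc i)\<bar> \<le> a * \<bar>x i - c i / 2 * sgn (x i)\<bar> + \<bar>z i\<bar>"
      using abs_triangle_ineq[of "a * (x i - c i / 2 * sgn (x i))" "z i"] a by (simp add: abs_mult)
    also have "\<dots> \<le> a * (c i / 2 + e) + \<bar>z i\<bar>"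
      using abs_sub_half_sgn_le[OF IH c_i e] a by simp
    finally show ?thesis
      using c_Suc[of i] Suc False e_Suc B by (simp add: algebra_simps)
  qed
qed

lemma open_loop_abs_le:
  fixes a K :: real and x z :: "nat \<Rightarrow> real"
  assumes a: "0 < a"
    and x_Suc: "\<And>i. n \<le> i \<Longrightarrow> i < N \<Longrightarrow> x (Suc i) = a * x i + z i"
    and x_n: "\<bar>x n\<bar> \<le> a ^ n * (K + noise_sum a z n)"
    and "n \<le> i" "i \<le> N"
  shows "\<bar>x i\<bar> \<le> a ^ i * (K + noise_sum a z i)"
  using \<open>n \<le> i\<close> \<open>i \<le> N\<close>
proof (induction i rule: dec_induct)
  case (step i)
  have "\<bar>x (Suc i)\<bar> \<le> a * \<bar>x i\<bar> + \<bar>z i\<bar>"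
    using x_Suc[of i] step abs_triangle_ineq[of "a * x i" "z i"] a by (simp add: abs_mult)
  also have "\<dots> \<le> a * (a ^ i * (K + noise_sum a z i)) + \<bar>z i\<bar>"
    using step a by simp
  also have "\<dots> = a ^ Suc i * (K + noise_sum a z (Suc i))"
    using power_mult_noise_sum_Suc[of a i z] a by (simp add: algebra_simps)
  finally show ?case .
qed (use x_n in simp)

lemma noise_envelope_mono:
  fixes a K :: real
  assumes "1 \<le> a" "0 \<le> K" "i \<le> N"
  shows "a ^ i * (K + noise_sum a z i) \<le> a ^ N * (K + noise_sum a z N)"
proof (rule mult_mono)
  show "a ^ i \<le> a ^ N" using assms by (simp add: power_increasing)
  show "K + noise_sum a z i \<le> K + noise_sum a z N"
    using noise_sum_mono[of a i N z] assms by simp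
qed (use assms noise_sum_nonneg[of a z] in auto)

lemma round_abs_le:
  fixes a B :: real and x z u c :: "nat \<Rightarrow> real"
  assumes a: "1 < a" "a < 2" and B: "0 \<le> B" and "1 \<le> k"
    and x_Suc: "\<And>i. x (Suc i) = a * x i + z i - u i"
    and x_0: "\<bar>x 0\<bar> \<le> c 0" and u_0: "u 0 = 0"
    and c_1: "c 1 = a * c 0 + B"
    and c_Suc: "\<And>i. 1 \<le> i \<Longrightarrow> i < k \<Longrightarrow> c (Suc i) = a / 2 * c i + B"
    and u_quantized: "\<And>i. 1 \<le> i \<Longrightarrow> i < k \<Longrightarrow> u i = a / 2 * c i * sgn (x i)"
    and u_open: "\<And>i. k \<le> i \<Longrightarrow> i < N \<Longrightarrow> u i = 0"
    and "1 \<le> i" "i \<le> N"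
  shows "\<bar>x i\<bar> \<le> a ^ i * (2 * c 0 + a * B / ((2 - a) * (a - 1)) + noise_sum a z i)"
proof -
  define K where "K = 2 * c 0 + a * B / ((2 - a) * (a - 1))"
  have c_0: "0 \<le> c 0" using x_0 by linarith
  have quantized: "\<bar>x i\<bar> \<le> a ^ i * (K + noise_sum a z i)" if "1 \<le> i" "i \<le> k" for i
  proof -
    have "\<bar>x i\<bar> \<le> c i + a ^ i * noise_sum a z i"
      using quantized_phase_abs_le[of a B k x z u c i] a B x_Suc x_0 u_0 c_1 c_Suc u_quantized that
      by simp
    moreover have "c i \<le> a ^ i * K"
      unfolding K_def using round_threshold_le[OF a B c_0 c_1 c_Suc that] .
    ultimately show ?thesis by (simp add: distrib_left)
  qed
  show ?thesis
  proof (cases "i \<le> k")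
    case True
    then show ?thesis using quantized \<open>1 \<le> i\<close> by (simp add: K_def)
  next
    case False
    have "x (Suc i) = a * x i + z i" if "k \<le> i" "i < N" for i
      using x_Suc[of i] u_open[OF that] by simp
    then show ?thesis
      using open_loop_abs_le[of a k N x z K i] quantized[of k] a \<open>1 \<le> k\<close> False \<open>i \<le> N\<close>
      by (simp add: K_def)
  qed
qed

lemma stopped_threshold_le:
  fixes P :: real and x c E :: "nat \<Rightarrow> real"
  assumes P: "1 \<le> P" and E: "0 \<le> E (k + j)"
    and c_open: "\<And>i. i \<le> j \<Longrightarrow> c (k + i) = P ^ i * c k"
    and not_stopped: "\<And>i. i < j \<Longrightarrow> \<not> \<bar>x (k + i)\<bar> \<le> c (k + i)"
    and c_k: "c k \<le> E k"
    and x_le: "\<And>i. k \<le> i \<Longrightarrow> i < k + j \<Longrightarrow> \<bar>x i\<bar> \<le> E i"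
    and E_mono: "\<And>i. i \<le> k + j \<Longrightarrow> E i \<le> E (k + j)"
  shows "c (k + j) \<le> P * E (k + j)"
proof (cases j)
  case 0
  then show ?thesis using c_k mult_right_mono[OF P E] by simp
next
  case (Suc j')
  have "c (k + j) = P * c (k + j')" using c_open[of j] c_open[of j'] Suc by simp
  also have "\<dots> \<le> P * \<bar>x (k + j')\<bar>"
    using not_stopped[of j'] Suc P by (intro mult_left_mono) auto
  also have "\<dots> \<le> P * E (k + j)"
    using x_le[of "k + j'"] E_mono[of "k + j'"] Suc P by (intro mult_left_mono) auto
  finally show ?thesis .
qed

theorem lemma2:
  fixes a B P \<delta> :: real and k m j :: nat and X Z U C :: "nat \<Rightarrow> real"
  assumes a1: "1 < a" and a2: "a < 2" and hB: "B > 0" and hP: "P \<ge> 1" and h\<delta>: "\<delta> > 0"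
    and hk: "k \<ge> 1"
    and hka: "(a / 2) ^ (k - 1) * a \<le> 1 - 3 * \<delta>"
    and sys: "\<And>n. X (Suc n) = a * X n + Z n - U n"
    and Cm: "C m > 0" and Xm: "\<bar>X m\<bar> \<le> C m"
    and Um: "U m = 0"
    and C1: "C (m + 1) = a * C m + B"
    and Ci: "\<And>i. 2 \<le> i \<Longrightarrow> i \<le> k \<Longrightarrow> C (m + i) = a / 2 * C (m + i - 1) + B"
    and Ui: "\<And>i. 1 \<le> i \<Longrightarrow> i \<le> k - 1 \<Longrightarrow> U (m + i) = a / 2 * C (m + i) * sgn (X (m + i))"
    and Cj: "\<And>j'. j' \<le> j \<Longrightarrow> C (m + k + j') = P ^ j' * C (m + k)"
    and Uj: "\<And>j'. j' < j \<Longrightarrow> U (m + k + j') = 0"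
    and jtau: "\<And>j'. j' < j \<Longrightarrow> \<not> (\<bar>X (m + k + j')\<bar> \<le> C (m + k + j'))"
  shows "(\<forall>i\<in>{1..k + j}. \<bar>X (m + i)\<bar> \<le>
            P * a ^ (k + j) * (2 * C m + a * B / ((2 - a) * (a - 1))
              + (\<Sum>l<k + j. \<bar>Z (m + l)\<bar> / a ^ (l + 1))))
       \<and> C (m + k + j) \<le>
            P * a ^ (k + j) * (2 * C m + a * B / ((2 - a) * (a - 1))
              + (\<Sum>l<k + j. \<bar>Z (m + l)\<bar> / a ^ (l + 1)))"
proof -
  define x where "x = (\<lambda>i. X (m + i))"
  define z where "z = (\<lambda>i. Z (m + i))"
  define u where "u = (\<lambda>i. U (m + i))"
  define c where "c = (\<lambda>i. C (m + i))"
  define K where "K = 2 * C m + a * B / ((2 - a) * (a - 1))"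
  define E where "E = (\<lambda>i. a ^ i * (K + noise_sum a z i))"
  have a: "0 < a" "1 \<le> a" and B: "0 \<le> B" using a1 hB by simp_all
  have K: "0 \<le> K" unfolding K_def using a1 a2 hB Cm by simp
  have start: "\<bar>x 0\<bar> \<le> c 0" "u 0 = 0" "c 1 = a * c 0 + B"
    using Xm Um C1 by (simp_all add: x_def u_def c_def)
  have c_Suc: "c (Suc i) = a / 2 * c i + B" if "1 \<le> i" "i < k" for i
    using Ci[of "Suc i"] that unfolding c_def by simp
  have x_Suc: "x (Suc i) = a * x i + z i - u i" for i
    using sys[of "m + i"] by (simp add: x_def z_def u_def)
  have u_quantized: "u i = a / 2 * c i * sgn (x i)" if "1 \<le> i" "i < k" for i
    using Ui[of i] that by (simp add: u_def c_def x_def)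
  have u_open: "u i = 0" if "k \<le> i" "i < k + j" for i
    using Uj[of "i - k"] that by (simp add: u_def)
  have x_le: "\<bar>x i\<bar> \<le> E i" if "1 \<le> i" "i \<le> k + j" for i
    using round_abs_le[OF a1 a2 B hk x_Suc start c_Suc u_quantized u_open that]
    by (simp add: c_def E_def K_def)
  have E_mono: "E i \<le> E (k + j)" if "i \<le> k + j" for i
    unfolding E_def using noise_envelope_mono[OF a(2) K that] .
  have E_nonneg: "0 \<le> E i" for i
    unfolding E_def using K noise_sum_nonneg[OF a(1)] a by simp
  have "c k \<le> a ^ k * K"
    using round_threshold_le[OF a1 a2 B _ start(3) c_Suc hk order_refl] Cm by (simp add: c_def K_def)
  also have "\<dots> \<le> E k" unfolding E_def using noise_sum_nonneg[OF a(1)] a by simp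
  finally have "C (m + k + j) \<le> P * E (k + j)"
    using stopped_threshold_le[of P E k j c x] hP E_nonneg Cj jtau x_le E_mono hk
    by (simp add: c_def x_def add.assoc)
  moreover have "E i \<le> P * E (k + j)" if "i \<le> k + j" for i
    using E_mono[OF that] mult_right_mono[OF hP E_nonneg[of "k + j"]] by simp
  ultimately show ?thesis
    using x_le unfolding E_def K_def x_def z_def noise_sum_def by (fastforce simp: mult.assoc)
qed

end
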